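(* Let $\mathbf{H}\in\mathbb{R}^{n\times m}$ be a random matrix (of arbitrary distribution not depending on $\rho$), $\mathbf{v}\sim\mathcal{N}(\mathbf{0},\rho^{-1}\mathbf{I}_n)$ independent of $\mathbf{H}$, $\mathbf{y}=\mathbf{H}\mathbf{e}+\mathbf{v}$, and let $\tau$ be as defined in the context (a function of $\mathbf{H}$ only). Let $d\in[0,\infty)$. If $\Pr(\tau\le\rho^{-1})\ \dot\le\ \rho^{-d}$, then $\Pr(\hat{\mathbf{s}}_{\mathrm{SDR}}\neq\mathbf{e})\ \dot\le\ \rho^{-d}$.
   Context: $\mathbf{e}$ is the all-ones vector. $\mathcal{X}=\{\mathbf{X}\in\mathbb{S}^{m+1}:\mathrm{diag}(\mathbf{X})=\mathbf{e},\mathbf{X}\succeq\mathbf{0}\}$, $\mathbf{M}=[\mathbf{I}_m\ -\mathbf{e}]$, $\mathcal{H}=\{\mathbf{X}\in\mathbb{S}^{m+1}:\mathrm{Tr}(\mathbf{M}\mathbf{X}\mathbf{M}^T)=1\}$, $\mathbf{L}_0=\mathbf{M}^T\mathbf{H}^T\mathbf{H}\mathbf{M}$, $\tau=\min_{\mathbf{X}\in\mathcal{X}\cap\mathcal{H}}\mathrm{Tr}(\mathbf{L}_0\mathbf{X})$. The SDR estimate: with $\mathbf{L}=\begin{bmatrix}\mathbf{H}^T\mathbf{H}&-\mathbf{H}^T\mathbf{y}\\-\mathbf{y}^T\mathbf{H}&\mathbf{y}^T\mathbf{y}\end{bmatrix}$ and $\mathbf{X}^\star$ an optimal point (fixed selection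 rule) of $\min_{\mathbf{X}\in\mathcal{X}}\mathrm{Tr}(\mathbf{L}\mathbf{X})$, $[\hat{\mathbf{s}}_{\mathrm{SDR}}]_i=\mathrm{sgn}([\mathbf{X}^\star]_{i,m+1})$ ($\mathrm{sgn}(x)=1$ if $x>0$, $-1$ otherwise). Notation: $f(\rho)\ \dot\le\ \rho^{-d}$ means $\limsup_{\rho\to\infty}\ln f(\rho)/\ln\rho\le -d$. *)

theory Defs
  imports "HOL-Analysis.Analysis" "HOL-Probability.Probability"
begin

text \<open>Matrices of size (m+1) x (m+1) are indexed by the type 'm option:
  index Some i stands for i in {1..m}, index None stands for m+1.
  H :: real^'m^'n is an n x m matrix (rows indexed by 'n).\<close>

type_synonym 'm sqm = "real^('m option)^('m option)"

definition ones :: "real^'k" where "ones = (\<chi> i. 1)"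

definition psd :: "real^'k^'k \<Rightarrow> bool" where
  "psd X \<longleftrightarrow> (\<forall>x. x \<bullet> (X *v x) \<ge> 0)"

definition SDPset :: "('m::finite) sqm set" where
  "SDPset = {X. transpose X = X \<and> (\<forall>i. X $ i $ i = 1) \<and> psd X}"

definition Mmat :: "real^('m::finite option)^'m" where
  "Mmat = (\<chi> i j. case j of Some k \<Rightarrow> (if k = i then 1 else 0) | None \<Rightarrow> -1)"

definition Hset :: "('m::finite) sqm set" where
  "Hset = {X. trace (Mmat ** X ** transpose Mmat) = 1}"

definition L0mat :: "real^'m^'n \<Rightarrow> ('m::finite) sqm" where
  "L0mat H = transpose Mmat ** transpose H ** H ** Mmat"

definition tau :: "real^('m::finite)^('n::finite) \<Rightarrow> real" where
  "tau H = Inf ((\<lambda>X. trace (L0mat H ** X)) ` (SDPset \<inter> Hset))"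

definition Lmat :: "real^('m::finite)^('n::finite) \<Rightarrow> real^'n \<Rightarrow> 'm sqm" where
  "Lmat H y = (\<chi> i j. case (i, j) of
       (Some a, Some b) \<Rightarrow> (transpose H ** H) $ a $ b
     | (Some a, None) \<Rightarrow> - ((transpose H *v y) $ a)
     | (None, Some b) \<Rightarrow> - ((transpose H *v y) $ b)
     | (None, None) \<Rightarrow> y \<bullet> y)"

definition is_selection_rule :: "('m sqm \<Rightarrow> ('m::finite) sqm) \<Rightarrow> bool" where
  "is_selection_rule sel \<longleftrightarrow>
     (\<forall>L. sel L \<in> SDPset \<and> (\<forall>X\<in>SDPset. trace (L ** sel L) \<le> trace (L ** X)))"

definition sgn1 :: "real \<Rightarrow> real" where
  "sgn1 x = (if x > 0 then 1 else -1)"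

definition s_sdr :: "('m sqm \<Rightarrow> ('m::finite) sqm) \<Rightarrow> real^'m^('n::finite) \<Rightarrow> real^'n \<Rightarrow> real^'m" where
  "s_sdr sel H y = (\<chi> i. sgn1 (sel (Lmat H y) $ Some i $ None))"

definition gauss_vec :: "real \<Rightarrow> (real^('n::finite)) measure" where
  "gauss_vec \<rho> = density lborel
     (\<lambda>v. ennreal (\<Prod>i\<in>UNIV. normal_density 0 (sqrt (1 / \<rho>)) (v $ i)))"

definition lnE :: "real \<Rightarrow> ereal" where
  "lnE x = (if x > 0 then ereal (ln x) else -\<infinity>)"

definition exp_le :: "(real \<Rightarrow> real) \<Rightarrow> real \<Rightarrow> bool" where
  "exp_le f d \<longleftrightarrow> Limsup at_top (\<lambda>\<rho>. lnE (f \<rho>) / ereal (ln \<rho>)) \<le> ereal (- d)"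

end

theory Submission
  imports Defs "HOL-Real_Asymp.Real_Asymp"
begin

text \<open>
  Let \<open>J\<close> be the all-ones matrix, the lifting of the transmitted vector \<open>e\<close>. If the SDR
  estimate errs, the optimal point \<open>X\<close> has some entry \<open>X\<^sub>i\<^sub>,\<^sub>m\<^sub>+\<^sub>1 \<le> 0\<close>, hence
  \<open>t = Tr(M X M\<^sup>T) = \<Sum>\<^sub>i (2 - 2 X\<^sub>i\<^sub>,\<^sub>m\<^sub>+\<^sub>1) \<ge> 2\<close>. Write \<open>L = G\<^sup>T G\<close> with \<open>G = [H, -y]\<close>;
  the rows of \<open>H M\<close> are the rows of \<open>G\<close> shifted by \<open>v\<^sub>k e\<^sub>m\<^sub>+\<^sub>1\<close>, so the parallelogram law
  and optimality of \<open>X\<close> against \<open>J\<close> give \<open>Tr(L\<^sub>0 X) \<le> 2 Tr(L X) + 2|v|\<^sup>2 \<le> 4|v|\<^sup>2\<close>.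
  The mixture \<open>X/t + (1 - 1/t) J\<close> is feasible for \<open>\<tau>\<close> with cost \<open>Tr(L\<^sub>0 X)/t\<close>, so an error
  forces \<open>\<tau> \<le> 2|v|\<^sup>2\<close>. Hence \<open>P(error) \<le> P(\<tau> \<le> s) + P(2|v|\<^sup>2 > s)\<close>, where a Chernoff bound
  gives \<open>P(2|v|\<^sup>2 > s) \<le> 2\<^sup>n\<^sup>/\<^sup>2 exp(-\<rho> s/8)\<close>; choosing \<open>s = \<rho>\<^sup>\<epsilon>\<^sup>-\<^sup>1\<close> and letting \<open>\<epsilon> \<rightarrow> 0\<close>
  transfers the exponent \<open>d\<close>.
\<close>

definition quad_form :: "real^'n^'n \<Rightarrow> real^'n \<Rightarrow> real" where
  "quad_form X x = x \<bullet> (X *v x)"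

lemma quad_form_eq_sum: "quad_form X x = (\<Sum>i\<in>UNIV. \<Sum>j\<in>UNIV. x$i * X$i$j * x$j)"
  by (simp add: quad_form_def inner_vec_def matrix_vector_mult_def sum_distrib_left mult.assoc)

lemma quad_form_nonneg: "psd X \<Longrightarrow> 0 \<le> quad_form X x"
  by (simp add: psd_def quad_form_def)

lemma quad_form_add_diff:
  "quad_form X (a + b) + quad_form X (a - b) = 2 * quad_form X a + 2 * quad_form X b"
  by (simp add: quad_form_def matrix_vector_right_distrib matrix_vector_mult_diff_distrib
      inner_add_left inner_add_right inner_diff_left inner_diff_right)

lemma quad_form_scaleR_add_scaleR:
  "quad_form (c *\<^sub>R X + d *\<^sub>R Y) x = c * quad_form X x + d * quad_form Y x"
  by (simp add: quad_form_eq_sum algebra_simps sum.distrib sum_distrib_left)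

lemma matrix_vector_mult_axis_nth: "(X *v axis j t) $ i = X$i$j * (t::real)"
  by (simp add: matrix_vector_mult_def axis_def if_distrib cong: if_cong)

lemma quad_form_axis: "quad_form X (axis i s) = s * s * X$i$i"
  by (simp add: quad_form_def inner_axis' matrix_vector_mult_axis_nth)

lemma quad_form_axis_add_axis:
  "quad_form X (axis i s + axis j t) = s * s * X$i$i + s * t * X$i$j + t * s * X$j$i + t * t * X$j$j"
  by (simp add: quad_form_def inner_axis' matrix_vector_mult_axis_nth algebra_simps)

lemma trace_mult_transpose_eq_sum_quad_form:
  fixes P :: "real^'n^'k"
  shows "trace (P ** X ** transpose P) = (\<Sum>k\<in>UNIV. quad_form X (P$k))"
proof -
  have "trace (P ** X ** transpose P) = (\<Sum>k\<in>UNIV. \<Sum>j\<in>UNIV. \<Sum>i\<in>UNIV. P$k$i * X$i$j * P$k$j)"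
    by (simp add: trace_def matrix_matrix_mult_def transpose_def sum_distrib_right)
  also have "\<dots> = (\<Sum>k\<in>UNIV. \<Sum>i\<in>UNIV. \<Sum>j\<in>UNIV. P$k$i * X$i$j * P$k$j)"
    by (rule sum.cong[OF refl sum.swap])
  finally show ?thesis
    by (simp add: quad_form_eq_sum)
qed

lemma trace_transpose_mult_eq_sum_quad_form:
  fixes P :: "real^'n^'k"
  shows "trace (transpose P ** P ** X) = (\<Sum>k\<in>UNIV. quad_form X (P$k))"
proof -
  have "trace (transpose P ** P ** X) = trace (transpose P ** (P ** X))"
    by (simp add: matrix_mul_assoc)
  also have "\<dots> = trace (P ** X ** transpose P)"
    by (rule trace_mul_sym)
  finally show ?thesis
    by (simp add: trace_mult_transpose_eq_sum_quad_form)
qed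

definition ones_mat :: "real^'n^'n" where
  "ones_mat = (\<chi> i j. 1)"

lemma quad_form_ones_mat: "quad_form ones_mat x = (\<Sum>i\<in>UNIV. x$i)\<^sup>2"
  by (simp add: quad_form_eq_sum ones_mat_def power2_eq_square sum_product)

lemma ones_mat_in_SDPset: "ones_mat \<in> SDPset"
proof -
  have "psd ones_mat"
    unfolding psd_def by (metis quad_form_def quad_form_ones_mat zero_le_power2)
  then show ?thesis by (simp add: SDPset_def ones_mat_def transpose_def vec_eq_iff)
qed

lemma SDPset_sym: "X \<in> SDPset \<Longrightarrow> X$i$j = X$j$i"
  unfolding SDPset_def by (metis (mono_tags, lifting) mem_Collect_eq transpose_def vec_lambda_beta)

lemma SDPset_entry_le_1:
  assumes "X \<in> SDPset"
  shows "X$i$j \<le> 1"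
proof (cases "i = j")
  case False
  have "0 \<le> quad_form X (axis i 1 + axis j (-1))"
    using assms by (intro quad_form_nonneg) (simp add: SDPset_def)
  then show ?thesis using assms SDPset_sym[OF assms, of i j] by (simp add: quad_form_axis_add_axis SDPset_def)
qed (use assms in \<open>simp add: SDPset_def\<close>)

lemma convex_SDPset: "convex SDPset"
proof (rule convexI)
  fix X Y :: "'m::finite sqm" and u v :: real
  assume X: "X \<in> SDPset" and Y: "Y \<in> SDPset" and uv: "0 \<le> u" "0 \<le> v" "u + v = 1"
  have "transpose (u *\<^sub>R X + v *\<^sub>R Y) = u *\<^sub>R X + v *\<^sub>R Y"
    unfolding vec_eq_iff
  proof (intro allI)
    show "transpose (u *\<^sub>R X + v *\<^sub>R Y) $ i $ j = (u *\<^sub>R X + v *\<^sub>R Y) $ i $ j" for i j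
      by (simp add: transpose_def SDPset_sym[OF X, of i j] SDPset_sym[OF Y, of i j])
  qed
  moreover have "(u *\<^sub>R X + v *\<^sub>R Y) $ i $ i = 1" for i
    using X Y uv by (simp add: SDPset_def)
  moreover have "0 \<le> quad_form (u *\<^sub>R X + v *\<^sub>R Y) x" for x
  proof -
    have "0 \<le> quad_form X x" "0 \<le> quad_form Y x"
      using X Y by (simp_all add: SDPset_def quad_form_nonneg)
    then show ?thesis
      using uv by (simp add: quad_form_scaleR_add_scaleR)
  qed
  ultimately show "u *\<^sub>R X + v *\<^sub>R Y \<in> SDPset"
    by (simp add: SDPset_def psd_def quad_form_def)
qed

definition aug_matrix :: "real^'m^'n \<Rightarrow> real^'n \<Rightarrow> real^('m option)^'n" where
  "aug_matrix H y = (\<chi> k j. case j of Some a \<Rightarrow> H$k$a | None \<Rightarrow> - y$k)"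

lemma sum_UNIV_option: "(\<Sum>i\<in>(UNIV :: 'a::finite option set). f i) = f None + (\<Sum>a\<in>UNIV. f (Some a))"
proof -
  have "sum f UNIV = sum f (insert None (range Some))"
    by (simp flip: UNIV_option_conv)
  then show ?thesis by (simp add: sum.reindex)
qed

lemma Lmat_eq: "Lmat H y = transpose (aug_matrix H y) ** aug_matrix H y"
  unfolding vec_eq_iff
proof (intro allI)
  show "Lmat H y $ i $ j = (transpose (aug_matrix H y) ** aug_matrix H y) $ i $ j" for i j
    by (cases i; cases j) (simp_all add: Lmat_def aug_matrix_def matrix_matrix_mult_def
        transpose_def matrix_vector_mult_def inner_vec_def sum_negf mult.commute)
qed

lemma L0mat_eq: "L0mat H = transpose (H ** Mmat) ** (H ** Mmat)"
  by (simp add: L0mat_def matrix_transpose_mul matrix_mul_assoc)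

lemma row_mult_Mmat_eq:
  "(H ** Mmat) $ k = aug_matrix H (H *v ones + v) $ k + axis None (v$k)"
  unfolding vec_eq_iff
proof
  show "(H ** Mmat) $ k $ j = (aug_matrix H (H *v ones + v) $ k + axis None (v$k)) $ j" for j
    by (cases j) (simp_all add: aug_matrix_def Mmat_def matrix_matrix_mult_def
        matrix_vector_mult_def ones_def axis_def if_distrib if_distribR sum.delta sum.delta'
        sum_negf cong: if_cong)
qed

lemma row_Mmat_eq: "Mmat $ i = axis (Some i) 1 + axis None (-1)"
  by (simp add: vec_eq_iff Mmat_def axis_def split: option.splits)

lemma sum_row_aug_matrix: "(\<Sum>j\<in>UNIV. aug_matrix H (H *v ones + v) $ k $ j) = - v$k"
  by (simp add: sum_UNIV_option aug_matrix_def matrix_vector_mult_def ones_def)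

lemma sum_row_mult_Mmat: "(\<Sum>j\<in>UNIV. (H ** Mmat) $ k $ j) = 0"
  using sum_row_aug_matrix[of H 0 k] by (simp add: row_mult_Mmat_eq[of H k 0] axis_def)

lemma sum_row_Mmat: "(\<Sum>j\<in>UNIV. Mmat $ i $ j) = 0"
  by (simp add: sum_UNIV_option Mmat_def)

lemma trace_L0mat_eq_sum: "trace (L0mat H ** X) = (\<Sum>k\<in>UNIV. quad_form X ((H ** Mmat) $ k))"
  by (simp add: L0mat_eq trace_transpose_mult_eq_sum_quad_form)

lemma trace_L0mat_nonneg: "psd X \<Longrightarrow> 0 \<le> trace (L0mat H ** X)"
  by (simp add: trace_L0mat_eq_sum sum_nonneg quad_form_nonneg)

lemma trace_Lmat_ones_mat: "trace (Lmat H (H *v ones + v) ** ones_mat) = v \<bullet> v"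
  by (simp add: Lmat_eq trace_transpose_mult_eq_sum_quad_form quad_form_ones_mat
      sum_row_aug_matrix inner_vec_def power2_eq_square)

lemma trace_L0mat_le:
  assumes "X \<in> SDPset"
  shows "trace (L0mat H ** X) \<le> 2 * trace (Lmat H (H *v ones + v) ** X) + 2 * (v \<bullet> v)"
proof -
  let ?G = "aug_matrix H (H *v ones + v)"
  have "quad_form X ((H ** Mmat) $ k) \<le> 2 * quad_form X (?G $ k) + 2 * (v$k * v$k)" for k
  proof -
    have "0 \<le> quad_form X (?G $ k - axis None (v$k))"
      using assms by (intro quad_form_nonneg) (simp add: SDPset_def)
    moreover have "quad_form X (axis None (v$k)) = v$k * v$k"
      using assms by (simp add: quad_form_axis SDPset_def)
    ultimately show ?thesis
      using quad_form_add_diff[of X "?G $ k" "axis None (v$k)"]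
      unfolding row_mult_Mmat_eq[of H k v] by linarith
  qed
  then have "trace (L0mat H ** X) \<le> (\<Sum>k\<in>UNIV. 2 * quad_form X (?G $ k) + 2 * (v$k * v$k))"
    unfolding trace_L0mat_eq_sum by (rule sum_mono)
  also have "\<dots> = 2 * trace (Lmat H (H *v ones + v) ** X) + 2 * (v \<bullet> v)"
    by (simp add: Lmat_eq trace_transpose_mult_eq_sum_quad_form sum.distrib sum_distrib_left inner_vec_def)
  finally show ?thesis .
qed

lemma trace_Mmat_eq:
  assumes "X \<in> SDPset"
  shows "trace (Mmat ** X ** transpose Mmat) = (\<Sum>i\<in>UNIV. 2 - 2 * X $ Some i $ None)"
  using assms SDPset_sym[OF assms, of None]
  by (simp add: trace_mult_transpose_eq_sum_quad_form row_Mmat_eq quad_form_axis_add_axis SDPset_def)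

lemma trace_Mmat_ge_2:
  assumes "X \<in> SDPset" and "X $ Some i $ None \<le> 0"
  shows "2 \<le> trace (Mmat ** X ** transpose Mmat)"
proof -
  have "2 - 2 * X $ Some i $ None \<le> (\<Sum>i\<in>UNIV. 2 - 2 * X $ Some i $ None)"
    by (rule member_le_sum) (use SDPset_entry_le_1[OF assms(1)] in auto)
  then show ?thesis using assms by (simp add: trace_Mmat_eq)
qed

lemma tau_le_trace: "X \<in> SDPset \<inter> Hset \<Longrightarrow> tau H \<le> trace (L0mat H ** X)"
  unfolding tau_def
  by (rule cInf_lower) (auto intro!: bdd_belowI[of _ 0] trace_L0mat_nonneg simp: SDPset_def)

text \<open>The rows of \<open>M\<close> and of \<open>H M\<close> sum to zero, so the all-ones matrix contributes
  nothing to \<open>Tr(M X M\<^sup>T)\<close> or \<open>Tr(L\<^sub>0 X)\<close>: mixing \<open>X\<close> with it divides both traces by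
  the same factor while staying in the convex set \<open>SDPset\<close>.\<close>
lemma tau_le_trace_div:
  assumes X: "X \<in> SDPset" and ge_1: "1 \<le> trace (Mmat ** X ** transpose Mmat)"
  shows "tau H \<le> trace (L0mat H ** X) / trace (Mmat ** X ** transpose Mmat)"
proof -
  define t where "t = trace (Mmat ** X ** transpose Mmat)"
  define X' where "X' = (1 / t) *\<^sub>R X + (1 - 1 / t) *\<^sub>R ones_mat"
  have t_eq: "t = (\<Sum>k\<in>UNIV. quad_form X (Mmat $ k))"
    by (simp add: t_def trace_mult_transpose_eq_sum_quad_form)
  have "X' \<in> SDPset"
    unfolding X'_def using ge_1 X ones_mat_in_SDPset
    by (intro convexD[OF convex_SDPset]) (auto simp: t_def)
  moreover have "trace (Mmat ** X' ** transpose Mmat) = 1"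
    using ge_1 t_eq by (simp add: X'_def trace_mult_transpose_eq_sum_quad_form quad_form_scaleR_add_scaleR
        quad_form_ones_mat sum_row_Mmat flip: sum_divide_distrib)
  ultimately have "tau H \<le> trace (L0mat H ** X')"
    by (intro tau_le_trace) (simp add: Hset_def)
  also have "\<dots> = trace (L0mat H ** X) / t"
    by (simp add: X'_def trace_L0mat_eq_sum quad_form_scaleR_add_scaleR quad_form_ones_mat
        sum_row_mult_Mmat sum_divide_distrib)
  finally show ?thesis by (simp add: t_def)
qed

lemma tau_le_of_s_sdr_ne:
  assumes sel: "is_selection_rule sel" and err: "s_sdr sel H (H *v ones + v) \<noteq> ones"
  shows "tau H \<le> 2 * (v \<bullet> v)"
proof -
  let ?L = "Lmat H (H *v ones + v)"
  define X where "X = sel ?L"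
  have X: "X \<in> SDPset" and opt: "trace (?L ** X) \<le> trace (?L ** ones_mat)"
    using sel ones_mat_in_SDPset unfolding is_selection_rule_def X_def by blast+
  have L0X: "trace (L0mat H ** X) \<le> 4 * (v \<bullet> v)"
    using trace_L0mat_le[OF X, of H v] opt by (simp add: trace_Lmat_ones_mat)
  obtain i where "X $ Some i $ None \<le> 0"
    using err by (auto simp: s_sdr_def X_def vec_eq_iff ones_def sgn1_def not_less split: if_splits)
  then have t: "2 \<le> trace (Mmat ** X ** transpose Mmat)"
    by (rule trace_Mmat_ge_2[OF X])
  have "tau H \<le> trace (L0mat H ** X) / trace (Mmat ** X ** transpose Mmat)"
    using X t by (intro tau_le_trace_div) auto
  also have "\<dots> \<le> 4 * (v \<bullet> v) / 2"
    using t L0X trace_L0mat_nonneg[of X H] X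
    by (intro frac_le) (auto simp: SDPset_def)
  finally show ?thesis by simp
qed

lemma prod_Basis_vec:
  fixes v :: "real^'n" and F :: "real \<Rightarrow> 'a::comm_monoid_mult"
  shows "(\<Prod>b\<in>Basis. F (v \<bullet> b)) = (\<Prod>i\<in>UNIV. F (v$i))"
proof -
  have Basis: "(Basis :: (real^'n) set) = (\<lambda>i. axis i 1) ` UNIV"
    by (auto simp: Basis_vec_def)
  have "inj (\<lambda>i::'n. axis i (1::real))"
    by (auto simp: inj_on_def axis_eq_axis)
  then show ?thesis
    unfolding Basis by (simp add: prod.reindex inner_axis)
qed

lemma nn_integral_lborel_prod_vec:
  fixes F :: "real \<Rightarrow> ennreal"
  assumes [measurable]: "F \<in> borel_measurable borel"
  shows "(\<integral>\<^sup>+v. (\<Prod>i\<in>UNIV. F (v$i)) \<partial>(lborel :: (real^'n) measure))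
       = (\<integral>\<^sup>+x. F x \<partial>lborel) ^ CARD('n)"
proof -
  have "(\<integral>\<^sup>+v. (\<Prod>i\<in>UNIV. F (v$i)) \<partial>(lborel :: (real^'n) measure))
      = (\<integral>\<^sup>+v. (\<Prod>b\<in>Basis. F (v \<bullet> b)) \<partial>(lborel :: (real^'n) measure))"
    by (simp add: prod_Basis_vec)
  also have "\<dots> = (\<Prod>b\<in>(Basis :: (real^'n) set). \<integral>\<^sup>+x. F x \<partial>lborel)"
    by (rule nn_integral_lborel_prod) auto
  finally show ?thesis by simp
qed

lemma nn_integral_normal_density:
  "0 < \<sigma> \<Longrightarrow> (\<integral>\<^sup>+x. normal_density \<mu> \<sigma> x \<partial>lborel) = 1"
  by (simp add: nn_integral_eq_integral)

lemma space_gauss_vec [simp]: "space (gauss_vec \<rho>) = UNIV"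
  by (simp add: gauss_vec_def)

lemma sets_gauss_vec [simp, measurable_cong]: "sets (gauss_vec \<rho>) = sets borel"
  by (simp add: gauss_vec_def)

lemma gauss_vec_eq_density_prod:
  "gauss_vec \<rho> = density lborel (\<lambda>v. \<Prod>i\<in>UNIV. ennreal (normal_density 0 (sqrt (1 / \<rho>)) (v$i)))"
  by (simp add: gauss_vec_def prod_ennreal)

lemma prob_space_gauss_vec:
  assumes "0 < \<rho>"
  shows "prob_space (gauss_vec \<rho> :: (real^'n) measure)"
proof
  have "emeasure (gauss_vec \<rho> :: (real^'n) measure) (space (gauss_vec \<rho>))
      = (\<integral>\<^sup>+x. normal_density 0 (sqrt (1 / \<rho>)) x \<partial>lborel) ^ CARD('n)"
    unfolding gauss_vec_eq_density_prod
    by (subst nn_integral_lborel_prod_vec[symmetric]) (auto simp: emeasure_density)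
  then show "emeasure (gauss_vec \<rho> :: (real^'n) measure) (space (gauss_vec \<rho>)) = 1"
    using assms by (simp add: nn_integral_normal_density)
qed

lemma exp_mult_normal_density:
  assumes "0 < \<rho>"
  shows "exp (\<rho> * x\<^sup>2 / 4) * normal_density 0 (sqrt (1 / \<rho>)) x
       = sqrt 2 * normal_density 0 (sqrt 2 * sqrt (1 / \<rho>)) x"
proof -
  have exps: "exp (\<rho> * x\<^sup>2 / 4) * exp (- x\<^sup>2 / (2 * (1 / \<rho>))) = exp (- x\<^sup>2 / (2 * (2 / \<rho>)))"
    unfolding exp_add[symmetric] using assms by (simp add: field_simps)
  have factors: "1 / sqrt (2 * pi * (1 / \<rho>)) = sqrt 2 * (1 / sqrt (2 * pi * (2 / \<rho>)))"
    using assms by (simp add: real_sqrt_mult real_sqrt_divide field_simps)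
  have "(sqrt (1 / \<rho>))\<^sup>2 = 1 / \<rho>" "(sqrt 2 * sqrt (1 / \<rho>))\<^sup>2 = 2 / \<rho>"
    using assms by (simp_all add: power_mult_distrib)
  then show ?thesis
    unfolding normal_density_def using exps factors by (simp add: mult_ac)
qed

lemma nn_integral_exp_mult_normal_density:
  assumes "0 < \<rho>"
  shows "(\<integral>\<^sup>+x. ennreal (exp (\<rho> * x\<^sup>2 / 4) * normal_density 0 (sqrt (1 / \<rho>)) x) \<partial>lborel)
       = ennreal (sqrt 2)"
proof -
  have "(\<integral>\<^sup>+x. ennreal (exp (\<rho> * x\<^sup>2 / 4) * normal_density 0 (sqrt (1 / \<rho>)) x) \<partial>lborel)
      = (\<integral>\<^sup>+x. ennreal (sqrt 2) * normal_density 0 (sqrt 2 * sqrt (1 / \<rho>)) x \<partial>lborel)"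
    using assms by (simp add: exp_mult_normal_density ennreal_mult)
  also have "\<dots> = ennreal (sqrt 2)"
    using assms by (simp add: nn_integral_cmult nn_integral_normal_density)
  finally show ?thesis .
qed

lemma nn_integral_gauss_vec_exp:
  assumes "0 < \<rho>"
  shows "(\<integral>\<^sup>+v. exp (\<rho> * (v \<bullet> v) / 4) \<partial>(gauss_vec \<rho> :: (real^'n) measure))
       = ennreal (sqrt 2 ^ CARD('n))"
proof -
  let ?nd = "normal_density 0 (sqrt (1 / \<rho>))"
  have split: "(\<Prod>i\<in>UNIV. ennreal (?nd (v$i))) * exp (\<rho> * (v \<bullet> v) / 4)
      = (\<Prod>i\<in>UNIV. ennreal (exp (\<rho> * (v$i)\<^sup>2 / 4) * ?nd (v$i)))" for v :: "real^'n"
  proof -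
    have "exp (\<rho> * (v \<bullet> v) / 4) = (\<Prod>i\<in>UNIV. exp (\<rho> * (v$i)\<^sup>2 / 4))"
      by (simp add: inner_vec_def power2_eq_square sum_distrib_left sum_divide_distrib
          flip: exp_sum)
    then show ?thesis
      by (simp add: prod_ennreal ennreal_mult' prod.distrib mult.commute)
  qed
  have "(\<integral>\<^sup>+v. exp (\<rho> * (v \<bullet> v) / 4) \<partial>(gauss_vec \<rho> :: (real^'n) measure))
      = (\<integral>\<^sup>+v. (\<Prod>i\<in>UNIV. ennreal (exp (\<rho> * (v$i)\<^sup>2 / 4) * ?nd (v$i))) \<partial>(lborel :: (real^'n) measure))"
    by (simp add: gauss_vec_eq_density_prod nn_integral_density split)
  also have "\<dots> = ennreal (sqrt 2) ^ CARD('n)"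
    by (subst nn_integral_lborel_prod_vec) (auto simp: nn_integral_exp_mult_normal_density[OF assms])
  finally show ?thesis by (simp add: ennreal_power)
qed

lemma gauss_vec_tail_le:
  assumes "0 < \<rho>"
  shows "measure (gauss_vec \<rho> :: (real^'n) measure) {v. s < 2 * (v \<bullet> v)}
       \<le> exp (- (\<rho> * s) / 8) * sqrt 2 ^ CARD('n)"
proof -
  let ?T = "{v :: real^'n. s < 2 * (v \<bullet> v)}"
  interpret prob_space "gauss_vec \<rho> :: (real^'n) measure"
    using assms by (rule prob_space_gauss_vec)
  have ind_le: "indicator ?T v \<le> ennreal (exp (- (\<rho> * s) / 8)) * exp (\<rho> * (v \<bullet> v) / 4)" for v
  proof (cases "v \<in> ?T")
    case True
    then have "ennreal 1 \<le> ennreal (exp (- (\<rho> * s) / 8) * exp (\<rho> * (v \<bullet> v) / 4))"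
      using assms by (intro ennreal_leI) (simp add: mult_left_mono algebra_simps flip: exp_add)
    then show ?thesis using True by (simp add: ennreal_mult)
  qed simp
  have "?T \<in> sets borel"
    by measurable
  then have "emeasure (gauss_vec \<rho>) ?T = (\<integral>\<^sup>+v. indicator ?T v \<partial>gauss_vec \<rho>)"
    by simp
  also have "\<dots> \<le> (\<integral>\<^sup>+v. ennreal (exp (- (\<rho> * s) / 8)) * exp (\<rho> * (v \<bullet> v) / 4)
                    \<partial>(gauss_vec \<rho> :: (real^'n) measure))"
    by (rule nn_integral_mono) (rule ind_le)
  also have "\<dots> = ennreal (exp (- (\<rho> * s) / 8) * sqrt 2 ^ CARD('n))"
    by (subst nn_integral_cmult) (simp_all add: nn_integral_gauss_vec_exp[OF assms] ennreal_mult)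
  finally show ?thesis by (simp add: emeasure_eq_measure)
qed

lemma continuous_on_trace_L0mat:
  "continuous_on UNIV (\<lambda>H :: real^'m^'n. trace (L0mat H ** X))"
  by (simp add: L0mat_def trace_def matrix_matrix_mult_def transpose_def) (intro continuous_intros)

text \<open>\<open>\<tau>\<close> is an infimum of continuous functions, hence upper semicontinuous.\<close>
lemma borel_measurable_tau: "tau \<in> borel_measurable (borel :: (real^'m^'n) measure)"
  unfolding borel_measurable_iff_less
proof
  fix a
  show "{H \<in> space (borel :: (real^'m^'n) measure). tau H < a} \<in> sets borel"
  proof (cases "SDPset \<inter> Hset = ({} :: 'm sqm set)")
    case True
    then show ?thesis by (simp add: tau_def)
  next
    case False
    have "tau H < a \<longleftrightarrow> (\<exists>X\<in>SDPset \<inter> Hset. trace (L0mat H ** X) < a)" for H :: "real^'m^'n"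
      unfolding tau_def using False
      by (subst cInf_less_iff) (auto intro!: bdd_belowI[of _ 0] trace_L0mat_nonneg simp: SDPset_def)
    then have "{H \<in> space borel. tau H < a} = (\<Union>X\<in>SDPset \<inter> Hset. {H :: real^'m^'n. trace (L0mat H ** X) < a})"
      by auto
    also have "open \<dots>"
      by (intro open_UN ballI open_Collect_less continuous_on_trace_L0mat continuous_on_const)
    finally show ?thesis by simp
  qed
qed

lemma measure_s_sdr_ne_le:
  fixes \<mu> :: "(real^'m^'n) measure"
  assumes "prob_space \<mu>" and sets_\<mu>: "sets \<mu> = sets borel" and sel: "is_selection_rule sel"
    and "0 < \<rho>"
  shows "measure (\<mu> \<Otimes>\<^sub>M gauss_vec \<rho>)
            {(H, v) \<in> space (\<mu> \<Otimes>\<^sub>M gauss_vec \<rho>). s_sdr sel H (H *v ones + v) \<noteq> ones}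
         \<le> measure \<mu> {H \<in> space \<mu>. tau H \<le> s} + exp (- (\<rho> * s) / 8) * sqrt 2 ^ CARD('n)"
proof -
  let ?N = "gauss_vec \<rho> :: (real^'n) measure"
  interpret N: prob_space ?N using \<open>0 < \<rho>\<close> by (rule prob_space_gauss_vec)
  interpret M: prob_space \<mu> by fact
  interpret pair_prob_space \<mu> ?N ..
  have [measurable]: "tau \<in> borel_measurable \<mu>"
    using borel_measurable_tau by (simp add: measurable_cong_sets[OF sets_\<mu> refl])
  define B1 where "B1 = {H \<in> space \<mu>. tau H \<le> s} \<times> space ?N"
  define B2 where "B2 = space \<mu> \<times> {v :: real^'n. s < 2 * (v \<bullet> v)}"
  have "{v :: real^'n. s < 2 * (v \<bullet> v)} \<in> sets borel"
    by measurable
  then have B1: "B1 \<in> sets (\<mu> \<Otimes>\<^sub>M ?N)" and B2: "B2 \<in> sets (\<mu> \<Otimes>\<^sub>M ?N)"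
    by (auto simp: B1_def B2_def)
  have "{(H, v) \<in> space (\<mu> \<Otimes>\<^sub>M ?N). s_sdr sel H (H *v ones + v) \<noteq> ones} \<subseteq> B1 \<union> B2"
    using tau_le_of_s_sdr_ne[OF sel]
    by (fastforce simp: B1_def B2_def space_pair_measure not_less)
  then have "measure (\<mu> \<Otimes>\<^sub>M ?N) {(H, v) \<in> space (\<mu> \<Otimes>\<^sub>M ?N). s_sdr sel H (H *v ones + v) \<noteq> ones}
      \<le> measure (\<mu> \<Otimes>\<^sub>M ?N) B1 + measure (\<mu> \<Otimes>\<^sub>M ?N) B2"
    using B1 B2 by (intro order.trans[OF P.finite_measure_mono measure_Un_le]) auto
  also have "measure (\<mu> \<Otimes>\<^sub>M ?N) B1 = measure \<mu> {H \<in> space \<mu>. tau H \<le> s}"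
    using N.emeasure_space_1 by (simp add: B1_def measure_def N.emeasure_pair_measure_Times)
  also have "measure (\<mu> \<Otimes>\<^sub>M ?N) B2 = measure ?N {v. s < 2 * (v \<bullet> v)}"
    using \<open>{v. s < 2 * (v \<bullet> v)} \<in> sets borel\<close>
    by (simp add: B2_def measure_def N.emeasure_pair_measure_Times M.emeasure_space_1)
  also have "\<dots> \<le> exp (- (\<rho> * s) / 8) * sqrt 2 ^ CARD('n)"
    using \<open>0 < \<rho>\<close> by (rule gauss_vec_tail_le)
  finally show ?thesis by simp
qed

lemma exp_leI:
  assumes bound: "\<And>a. a < d \<Longrightarrow> eventually (\<lambda>\<rho>. f \<rho> \<le> \<rho> powr (- a)) at_top"
  shows "exp_le f d"
  unfolding exp_le_def
proof (rule ereal_le_epsilon2)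
  fix e :: real assume "0 < e"
  have "eventually (\<lambda>\<rho>. f \<rho> \<le> \<rho> powr (- (d - e))) at_top"
    using \<open>0 < e\<close> by (intro bound) simp
  then have "eventually (\<lambda>\<rho>. lnE (f \<rho>) / ereal (ln \<rho>) \<le> ereal (- (d - e))) at_top"
    using eventually_gt_at_top[of 1]
  proof eventually_elim
    case (elim \<rho>)
    show ?case
    proof (cases "0 < f \<rho>")
      case True
      have "ln (f \<rho>) \<le> ln (\<rho> powr (- (d - e)))"
        using True elim by (intro ln_mono) auto
      then have "ln (f \<rho>) \<le> - (d - e) * ln \<rho>"
        using elim by (simp add: ln_powr)
      then show ?thesis
        using True elim by (simp add: lnE_def divide_le_eq)
    qed (use elim in \<open>simp add: lnE_def\<close>)
  qed
  then have "Limsup at_top (\<lambda>\<rho>. lnE (f \<rho>) / ereal (ln \<rho>)) \<le> ereal (- (d - e))"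
    by (rule Limsup_bounded)
  then show "Limsup at_top (\<lambda>\<rho>. lnE (f \<rho>) / ereal (ln \<rho>)) \<le> ereal (- d) + ereal e"
    by simp
qed

lemma exp_leD:
  assumes "exp_le f d" and nonneg: "\<And>\<rho>. 0 \<le> f \<rho>" and "a < d"
  shows "eventually (\<lambda>\<rho>. f \<rho> \<le> \<rho> powr (- a)) at_top"
proof -
  have "Limsup at_top (\<lambda>\<rho>. lnE (f \<rho>) / ereal (ln \<rho>)) < ereal (- a)"
    using assms(1,3) unfolding exp_le_def by (simp add: le_less_trans)
  then have "eventually (\<lambda>\<rho>. lnE (f \<rho>) / ereal (ln \<rho>) < ereal (- a)) at_top"
    by (rule Limsup_lessD)
  then show ?thesis
    using eventually_gt_at_top[of 1]
  proof eventually_elim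
    case (elim \<rho>)
    show ?case
    proof (cases "0 < f \<rho>")
      case True
      with elim have "ln (f \<rho>) < - a * ln \<rho>"
        by (simp add: lnE_def divide_less_eq)
      then have "f \<rho> < exp (- a * ln \<rho>)"
        using True by (metis exp_less_cancel_iff exp_ln)
      then show ?thesis
        using elim by (simp add: powr_def)
    qed (use nonneg[of \<rho>] in simp)
  qed
qed

text \<open>Evaluating \<open>f\<close> at \<open>\<rho>\<^bsup>1-\<epsilon>\<^esup>\<close> costs only a factor \<open>1 - \<epsilon>\<close> in the exponent,
  and the exponential term is negligible against every power of \<open>\<rho>\<close>.\<close>
lemma exp_le_of_le_rescaled:
  assumes f: "exp_le f d" and f_nonneg: "\<And>\<rho>. 0 \<le> f \<rho>"
    and g_le: "\<And>\<rho> \<epsilon>. 0 < \<rho> \<Longrightarrow> g \<rho> \<le> f (\<rho> powr (1 - \<epsilon>)) + K * exp (- c * \<rho> powr \<epsilon>)"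
    and g_le_1: "\<And>\<rho>. 0 < \<rho> \<Longrightarrow> g \<rho> \<le> 1"
    and "0 < K" and "0 < c"
  shows "exp_le g d"
proof (rule exp_leI)
  fix a assume "a < d"
  show "eventually (\<lambda>\<rho>. g \<rho> \<le> \<rho> powr (- a)) at_top"
  proof (cases "a \<le> 0")
    case True
    show ?thesis using eventually_ge_at_top[of 1]
    proof eventually_elim
      case (elim \<rho>)
      then have "1 \<le> \<rho> powr (- a)" using True by (simp add: ge_one_powr_ge_zero)
      then show ?case using g_le_1[of \<rho>] elim by linarith
    qed
  next
    case False
    define b where "b = (a + d) / 2"
    define \<epsilon> where "\<epsilon> = (b - a) / (2 * b)"
    have b: "a < b" "b < d" "0 < b" and \<epsilon>: "0 < \<epsilon>" "\<epsilon> < 1"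
      using \<open>a < d\<close> False by (auto simp: b_def \<epsilon>_def field_simps)
    have "a < (1 - \<epsilon>) * b"
      using b by (simp add: \<epsilon>_def field_simps)
    have "filterlim (\<lambda>\<rho>::real. \<rho> powr (1 - \<epsilon>)) at_top at_top"
      using \<epsilon> by real_asymp
    with exp_leD[OF f f_nonneg \<open>b < d\<close>]
    have "eventually (\<lambda>\<rho>. f (\<rho> powr (1 - \<epsilon>)) \<le> (\<rho> powr (1 - \<epsilon>)) powr (- b)) at_top"
      by (rule eventually_compose_filterlim)
    moreover have "eventually (\<lambda>\<rho>::real. \<rho> powr (- ((1 - \<epsilon>) * b)) \<le> \<rho> powr (- a) / 2) at_top"
      using \<open>a < (1 - \<epsilon>) * b\<close> by real_asymp
    moreover have "eventually (\<lambda>\<rho>::real. K * exp (- c * \<rho> powr \<epsilon>) \<le> \<rho> powr (- a) / 2) at_top"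
      using \<epsilon> \<open>0 < K\<close> \<open>0 < c\<close> by real_asymp
    ultimately show ?thesis
      using eventually_gt_at_top[of 0]
    proof eventually_elim
      case (elim \<rho>)
      then have "(\<rho> powr (1 - \<epsilon>)) powr (- b) = \<rho> powr (- ((1 - \<epsilon>) * b))"
        by (simp add: powr_powr)
      then show ?case using g_le[OF elim(4), of \<epsilon>] elim by linarith
    qed
  qed
qed

theorem lemma2:
  fixes \<mu> :: "(real^('m::finite)^('n::finite)) measure"
    and sel :: "'m sqm \<Rightarrow> 'm sqm"
    and d :: real
  assumes "prob_space \<mu>"
    and "sets \<mu> = sets borel"
    and "is_selection_rule sel"
    and "d \<ge> 0"
    and "exp_le (\<lambda>\<rho>. measure \<mu> {H \<in> space \<mu>. tau H \<le> 1 / \<rho>}) d"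
  shows "exp_le (\<lambda>\<rho>. measure (\<mu> \<Otimes>\<^sub>M gauss_vec \<rho>)
            {(H, v) \<in> space (\<mu> \<Otimes>\<^sub>M gauss_vec \<rho>). s_sdr sel H (H *v ones + v) \<noteq> ones}) d"
proof (rule exp_le_of_le_rescaled[OF assms(5)])
  fix \<rho> \<epsilon> :: real
  assume "0 < \<rho>"
  have "\<rho> * (1 / \<rho> powr (1 - \<epsilon>)) = \<rho> powr \<epsilon>"
    using \<open>0 < \<rho>\<close> powr_diff[of \<rho> 1 "1 - \<epsilon>"] by simp
  then show "measure (\<mu> \<Otimes>\<^sub>M gauss_vec \<rho>)
            {(H, v) \<in> space (\<mu> \<Otimes>\<^sub>M gauss_vec \<rho>). s_sdr sel H (H *v ones + v) \<noteq> ones}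
         \<le> measure \<mu> {H \<in> space \<mu>. tau H \<le> 1 / \<rho> powr (1 - \<epsilon>)}
           + sqrt 2 ^ CARD('n) * exp (- (1 / 8) * \<rho> powr \<epsilon>)"
    using measure_s_sdr_ne_le[OF assms(1-3) \<open>0 < \<rho>\<close>, of "1 / \<rho> powr (1 - \<epsilon>)"]
    by (simp add: mult.commute)
qed (auto intro!: prob_space.prob_le_1 prob_space_pair assms(1) prob_space_gauss_vec)

end
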